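(* Let $A\in\mathbb{R}^{n\times n}$ be symmetric positive-semidefinite, $b\in\mathbb{R}^n$, $g:\mathbb{R}^n\to(-\infty,\infty]$ proper, lower semicontinuous and convex, and $\gamma>0$ such that $I-\gamma A$ is positive-definite. Set $Q:=(I-\gamma A)^{-1}$, $c:=\gamma Qb$, $P:=Q-I$, and $\psi(u):=\frac12\langle Pu,u\rangle+\langle c,u\rangle+\gamma e_\gamma g(u)$. Then for all $u,w,z\in\mathbb{R}^n$: $z\in\partial^2\psi(u)(w)$ if and only if $\frac1\gamma(z-Pw)\in\partial^2g\Big(\operatorname{Prox}_{\gamma g}(u),\frac1\gamma\big(u-\operatorname{Prox}_{\gamma g}(u)\big)\Big)(Qw-z)$.
   Context: Moreau envelope and proximal map: $e_\gamma g(x):=\inf_y\{g(y)+\frac1{2\gamma}\|y-x\|^2\}$, $\operatorname{Prox}_{\gamma g}(x):=\operatorname{argmin}_y\{g(y)+\frac1{2\gamma}\|y-x\|^2\}$ ($\psi$ is continuously differentiable). Regular normal cone: $\widehat N_\Omega(\bar z):=\{v\mid \limsup_{z\to\bar z,\,z\in\Omega}\langle v,z-\bar z\rangle/\|z-\bar z\|\le 0\}$; limiting normal cone $N_\Omega(\bar z)$: all $v$ with $z_k\to\bar z$, $z_k\in\Omega$, $v_k\to v$, $v_k\in\widehat N_\Omega(z_k)$. Coderivative of $F:\mathbb{R}^n\rightrightarrows\mathbb{R}^m$: $D^*F(\bar x,\bar y)(v):=\{u\mid(u,-v)\in N_{\operatorname{gph}F}(\bar x,\bar y)\}$. Second-order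 subdifferential: for $\bar v\in\partial g(\bar x)$ (convex subdifferential), $\partial^2g(\bar x,\bar v)(w):=D^*(\partial g)(\bar x,\bar v)(w)$; for the $\mathcal{C}^1$ function $\psi$, $\partial^2\psi(u)(w):=D^*(\nabla\psi)(u,\nabla\psi(u))(w)$. *)

theory Defs
  imports "HOL-Analysis.Analysis"
begin

definition proper_fun :: "('a \<Rightarrow> ereal) \<Rightarrow> bool" where
  "proper_fun g \<longleftrightarrow> (\<forall>x. g x \<noteq> -\<infinity>) \<and> (\<exists>x. g x < \<infinity>)"

definition lsc_fun :: "('a::topological_space \<Rightarrow> ereal) \<Rightarrow> bool" where
  "lsc_fun g \<longleftrightarrow> (\<forall>x. g x \<le> Liminf (at x) g)"

definition convex_fun :: "('a::real_vector \<Rightarrow> ereal) \<Rightarrow> bool" where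
  "convex_fun g \<longleftrightarrow> (\<forall>x y t. 0 < t \<and> t < 1 \<longrightarrow>
      g (t *\<^sub>R x + (1 - t) *\<^sub>R y) \<le> ereal t * g x + ereal (1 - t) * g y)"

definition moreau_env :: "real \<Rightarrow> ('a::real_normed_vector \<Rightarrow> ereal) \<Rightarrow> 'a \<Rightarrow> ereal" where
  "moreau_env \<gamma> g x = (INF y. g y + ereal ((1 / (2 * \<gamma>)) * (norm (y - x))\<^sup>2))"

definition prox :: "real \<Rightarrow> ('a::real_normed_vector \<Rightarrow> ereal) \<Rightarrow> 'a \<Rightarrow> 'a" where
  "prox \<gamma> g x = (THE p. \<forall>y. g p + ereal ((1 / (2 * \<gamma>)) * (norm (p - x))\<^sup>2)
                              \<le> g y + ereal ((1 / (2 * \<gamma>)) * (norm (y - x))\<^sup>2))"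

definition subdiff :: "('a::real_inner \<Rightarrow> ereal) \<Rightarrow> 'a \<Rightarrow> 'a set" where
  "subdiff g x = {v. \<bar>g x\<bar> \<noteq> \<infinity> \<and> (\<forall>y. g x + ereal (inner v (y - x)) \<le> g y)}"

definition grad :: "('a::real_inner \<Rightarrow> real) \<Rightarrow> 'a \<Rightarrow> 'a" where
  "grad f x = (SOME v. (f has_derivative (\<lambda>h. inner v h)) (at x))"

definition reg_normal_cone :: "'a::real_inner set \<Rightarrow> 'a \<Rightarrow> 'a set" where
  "reg_normal_cone \<Omega> zb = {v. zb \<in> \<Omega> \<and>
      Limsup (at zb within \<Omega>) (\<lambda>z. ereal (inner v (z - zb) / norm (z - zb))) \<le> 0}"

definition lim_normal_cone :: "'a::real_inner set \<Rightarrow> 'a \<Rightarrow> 'a set" where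
  "lim_normal_cone \<Omega> zb = {v. \<exists>z vs. (\<forall>k. z k \<in> \<Omega>) \<and> z \<longlonglongrightarrow> zb \<and>
      vs \<longlonglongrightarrow> v \<and> (\<forall>k. vs k \<in> reg_normal_cone \<Omega> (z k))}"

definition gph :: "('a \<Rightarrow> 'b set) \<Rightarrow> ('a \<times> 'b) set" where
  "gph F = {(x, y). y \<in> F x}"

definition coderiv :: "('a::real_inner \<Rightarrow> 'b::real_inner set) \<Rightarrow> 'a \<Rightarrow> 'b \<Rightarrow> 'b \<Rightarrow> 'a set" where
  "coderiv F xb yb v = {u. (u, - v) \<in> lim_normal_cone (gph F) (xb, yb)}"

definition subdiff2 :: "('a::real_inner \<Rightarrow> ereal) \<Rightarrow> 'a \<Rightarrow> 'a \<Rightarrow> 'a \<Rightarrow> 'a set" where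
  "subdiff2 g xb vb w = coderiv (subdiff g) xb vb w"

definition subdiff2_C1 :: "('a::real_inner \<Rightarrow> real) \<Rightarrow> 'a \<Rightarrow> 'a \<Rightarrow> 'a set" where
  "subdiff2_C1 \<psi> u w = coderiv (\<lambda>x. {grad \<psi> x}) u (grad \<psi> u) w"

end

(*
  The proof rests on the formula grad psi u = Q u + c - Prox u: the Moreau envelope is
  differentiable with gradient (u - Prox u) / gamma, since it is squeezed between two
  quadratics around u (firm nonexpansiveness of Prox gives the lower one), and P + I = Q.
  As u = p + gamma v with v in the subdifferential of g at p exactly when p = Prox u, the
  graph of grad psi is the image of the graph of the subdifferential under the affine
  bijection (p, v) |-> (p + gamma v, Q (p + gamma v) + c - p). An affine bijection carries
  limiting normal cones through the adjoint of its linear part, which here sends (z, -w) to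
  gamma ((z - P w) / gamma, -(Q w - z)); normal cones being cones, the factor gamma is
  harmless. Only symmetry and invertibility of I - gamma A enter: neither the positive
  semidefiniteness of A nor the particular value of c plays a role.
*)
theory Submission
  imports Defs "HOL-Real_Asymp.Real_Asymp"
begin

section \<open>Limiting normal cones under affine isomorphisms\<close>

lemma reg_normal_cone_iff:
  fixes v :: "'a::real_inner"
  shows "v \<in> reg_normal_cone \<Omega> x \<longleftrightarrow>
    x \<in> \<Omega> \<and> (\<forall>e>0. \<forall>\<^sub>F z in at x within \<Omega>. inner v (z - x) < e * norm (z - x))"
proof -
  have quotient_iff: "inner v (z - x) / norm (z - x) < e \<longleftrightarrow> inner v (z - x) < e * norm (z - x)"
    if "z \<noteq> x" for z e
    using that by (simp add: divide_less_eq)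
  have "Limsup (at x within \<Omega>) (\<lambda>z. ereal (inner v (z - x) / norm (z - x))) \<le> 0 \<longleftrightarrow>
      (\<forall>e>0. \<forall>\<^sub>F z in at x within \<Omega>. inner v (z - x) / norm (z - x) < e)"
    unfolding Limsup_le_iff
  proof (intro iffI allI impI)
    fix e :: real
    assume "\<forall>y>0. \<forall>\<^sub>F z in at x within \<Omega>. ereal (inner v (z - x) / norm (z - x)) < y" "e > 0"
    then show "\<forall>\<^sub>F z in at x within \<Omega>. inner v (z - x) / norm (z - x) < e"
      by (metis (mono_tags, lifting) ereal_less(2) eventually_mono less_ereal.simps(1))
  next
    fix y :: ereal
    assume "\<forall>e>0. \<forall>\<^sub>F z in at x within \<Omega>. inner v (z - x) / norm (z - x) < e" "y > 0"
    then show "\<forall>\<^sub>F z in at x within \<Omega>. ereal (inner v (z - x) / norm (z - x)) < y"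
      by (cases y) auto
  qed
  also have "\<dots> \<longleftrightarrow> (\<forall>e>0. \<forall>\<^sub>F z in at x within \<Omega>. inner v (z - x) < e * norm (z - x))"
    by (intro all_cong1 imp_cong refl eventually_cong)
       (auto simp: eventually_at_filter quotient_iff)
  finally show ?thesis
    unfolding reg_normal_cone_def by blast
qed

lemma reg_normal_cone_scaleR:
  assumes "c > 0" "v \<in> reg_normal_cone \<Omega> x"
  shows "c *\<^sub>R v \<in> reg_normal_cone \<Omega> x"
  unfolding reg_normal_cone_iff
proof (intro conjI allI impI)
  show "x \<in> \<Omega>"
    using assms(2) by (simp add: reg_normal_cone_iff)
  fix e :: real
  assume "e > 0"
  then have "\<forall>\<^sub>F z in at x within \<Omega>. inner v (z - x) < (e / c) * norm (z - x)"
    using assms(2) divide_pos_pos[OF \<open>e > 0\<close> \<open>c > 0\<close>]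
    unfolding reg_normal_cone_iff by blast
  then show "\<forall>\<^sub>F z in at x within \<Omega>. inner (c *\<^sub>R v) (z - x) < e * norm (z - x)"
    by eventually_elim (use \<open>c > 0\<close> in \<open>simp add: pos_less_divide_eq mult.commute\<close>)
qed

lemma lim_normal_cone_scaleR:
  assumes "c > 0" "v \<in> lim_normal_cone \<Omega> x"
  shows "c *\<^sub>R v \<in> lim_normal_cone \<Omega> x"
proof -
  obtain z vs where "\<forall>k. z k \<in> \<Omega>" "z \<longlonglongrightarrow> x" "vs \<longlonglongrightarrow> v"
    and "\<forall>k. vs k \<in> reg_normal_cone \<Omega> (z k)"
    using assms(2) unfolding lim_normal_cone_def by blast
  then show ?thesis
    unfolding lim_normal_cone_def
    by (intro CollectI exI[of _ z] exI[of _ "\<lambda>k. c *\<^sub>R vs k"])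
       (auto intro: tendsto_scaleR reg_normal_cone_scaleR[OF \<open>c > 0\<close>])
qed

lemma lim_normal_cone_scaleR_iff:
  assumes "c > 0"
  shows "c *\<^sub>R v \<in> lim_normal_cone \<Omega> x \<longleftrightarrow> v \<in> lim_normal_cone \<Omega> x"
  using lim_normal_cone_scaleR[of c v] lim_normal_cone_scaleR[of "1 / c" "c *\<^sub>R v"] assms
  by auto

lemma reg_normal_cone_affine_imageD:
  fixes L :: "'a::euclidean_space \<Rightarrow> 'b::euclidean_space"
  assumes L: "linear L" "inj L"
    and y: "y \<in> reg_normal_cone ((\<lambda>x. L x + a) ` \<Omega>) (L z + a)"
  shows "adjoint L y \<in> reg_normal_cone \<Omega> z"
  unfolding reg_normal_cone_iff
proof (intro conjI allI impI)
  let ?\<Phi> = "\<lambda>x. L x + a"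
  show "z \<in> \<Omega>"
    using y L(2) by (auto simp: reg_normal_cone_iff dest: injD)
  obtain K where K: "K > 0" "\<And>x. norm (L x) \<le> K * norm x"
    using linear_bounded_pos[OF L(1)] by blast
  have "filterlim ?\<Phi> (at (?\<Phi> z) within ?\<Phi> ` \<Omega>) (at z within \<Omega>)"
    unfolding filterlim_at
  proof
    show "\<forall>\<^sub>F x in at z within \<Omega>. ?\<Phi> x \<in> ?\<Phi> ` \<Omega> \<and> ?\<Phi> x \<noteq> ?\<Phi> z"
      by (simp add: eventually_at_filter inj_eq[OF L(2)])
    show "(?\<Phi> \<longlongrightarrow> ?\<Phi> z) (at z within \<Omega>)"
      using L(1) unfolding linear_conv_bounded_linear
      by (intro tendsto_add tendsto_const linear_continuous_within[THEN continuous_within[THEN iffD1]])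
  qed
  fix e :: real
  assume "e > 0"
  then have "\<forall>\<^sub>F w in at (?\<Phi> z) within ?\<Phi> ` \<Omega>. inner y (w - ?\<Phi> z) < (e / K) * norm (w - ?\<Phi> z)"
    using y divide_pos_pos[OF \<open>e > 0\<close> K(1)] unfolding reg_normal_cone_iff by blast
  from eventually_compose_filterlim[OF this \<open>filterlim ?\<Phi> _ _\<close>]
  have "\<forall>\<^sub>F x in at z within \<Omega>. inner y (L (x - z)) < (e / K) * norm (L (x - z))"
    by (simp add: linear_diff[OF L(1)])
  then show "\<forall>\<^sub>F x in at z within \<Omega>. inner (adjoint L y) (x - z) < e * norm (x - z)"
  proof eventually_elim
    fix x
    assume "inner y (L (x - z)) < (e / K) * norm (L (x - z))"
    also have "\<dots> \<le> (e / K) * (K * norm (x - z))"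
      using K \<open>e > 0\<close> by (intro mult_left_mono) auto
    finally show "inner (adjoint L y) (x - z) < e * norm (x - z)"
      using K(1) by (simp add: adjoint_clauses[OF L(1)])
  qed
qed

lemma lim_normal_cone_affine_imageD:
  fixes L :: "'a::euclidean_space \<Rightarrow> 'b::euclidean_space"
  assumes L: "linear L" "inj L"
    and y: "y \<in> lim_normal_cone ((\<lambda>x. L x + a) ` \<Omega>) (L z + a)"
  shows "adjoint L y \<in> lim_normal_cone \<Omega> z"
proof -
  obtain x ys where x: "\<forall>k. x k \<in> (\<lambda>x. L x + a) ` \<Omega>" "x \<longlonglongrightarrow> L z + a"
    and ys: "ys \<longlonglongrightarrow> y" "\<forall>k. ys k \<in> reg_normal_cone ((\<lambda>x. L x + a) ` \<Omega>) (x k)"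
    using y unfolding lim_normal_cone_def by blast
  obtain L' where L': "linear L'" "\<And>x. L' (L x) = x"
    using linear_injective_left_inverse[OF L] by (metis comp_apply id_apply)
  define zs where "zs k = L' (x k - a)" for k
  have x_eq: "x k = L (zs k) + a" and zs_in: "zs k \<in> \<Omega>" for k
  proof -
    obtain w where "w \<in> \<Omega>" "x k = L w + a"
      using x(1) by blast
    then show "x k = L (zs k) + a" "zs k \<in> \<Omega>"
      using L'(2) by (simp_all add: zs_def)
  qed
  have "zs \<longlonglongrightarrow> L' (L z + a - a)"
    unfolding zs_def using L'(1) unfolding linear_conv_bounded_linear
    by (rule bounded_linear.tendsto) (intro tendsto_diff x(2) tendsto_const)
  then have "zs \<longlonglongrightarrow> z"
    using L'(2) by simp
  moreover have "(\<lambda>k. adjoint L (ys k)) \<longlonglongrightarrow> adjoint L y"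
    using adjoint_linear[OF L(1)] ys(1) unfolding linear_conv_bounded_linear
    by (rule bounded_linear.tendsto)
  moreover have "adjoint L (ys k) \<in> reg_normal_cone \<Omega> (zs k)" for k
    using ys(2) unfolding x_eq by (intro reg_normal_cone_affine_imageD[OF L]) blast
  ultimately show ?thesis
    unfolding lim_normal_cone_def using zs_in by (intro CollectI exI conjI allI)
qed

lemma lim_normal_cone_affine_image_iff:
  fixes L :: "'a::euclidean_space \<Rightarrow> 'b::euclidean_space"
  assumes L: "linear L" "bij L"
  shows "y \<in> lim_normal_cone ((\<lambda>x. L x + a) ` \<Omega>) (L z + a) \<longleftrightarrow>
    adjoint L y \<in> lim_normal_cone \<Omega> z"
proof
  show "y \<in> lim_normal_cone ((\<lambda>x. L x + a) ` \<Omega>) (L z + a) \<Longrightarrow> adjoint L y \<in> lim_normal_cone \<Omega> z"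
    by (rule lim_normal_cone_affine_imageD[OF L(1) bij_is_inj[OF L(2)]])
next
  obtain L' where L': "linear L'" "\<And>x. L' (L x) = x"
    using linear_injective_left_inverse[OF L(1) bij_is_inj[OF L(2)]] by (metis comp_apply id_apply)
  have L_L': "L (L' x) = x" for x
  proof -
    obtain w where "x = L w"
      using L(2) by (auto simp: bij_def surj_def)
    then show ?thesis
      using L'(2) by simp
  qed
  have "inj L'"
    by (metis L_L' injI)
  have image_eq: "(\<lambda>x. L' x + - L' a) ` (\<lambda>x. L x + a) ` \<Omega> = \<Omega>"
    by (simp add: image_image linear_add[OF L'(1)] L'(2))
  have point_eq: "L' (L z + a) + - L' a = z"
    by (simp add: linear_add[OF L'(1)] L'(2))
  have "x \<bullet> adjoint L' (adjoint L y) = x \<bullet> y" for x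
    by (simp add: adjoint_clauses(1)[OF L'(1)] adjoint_clauses(1)[OF L(1)] L_L')
  then have adjoint_eq: "adjoint L' (adjoint L y) = y"
    using vector_eq_ldot by blast
  assume "adjoint L y \<in> lim_normal_cone \<Omega> z"
  then show "y \<in> lim_normal_cone ((\<lambda>x. L x + a) ` \<Omega>) (L z + a)"
    using lim_normal_cone_affine_imageD[OF L'(1) \<open>inj L'\<close>,
        of "adjoint L y" "- L' a" "(\<lambda>x. L x + a) ` \<Omega>" "L z + a"]
    by (simp only: image_eq point_eq adjoint_eq)
qed

section \<open>The proximal point\<close>

lemma lsc_funD:
  assumes "lsc_fun g" "c < g x"
  shows "\<forall>\<^sub>F y in nhds x. c < g y"
proof -
  have "c < Liminf (at x) g"
    using assms unfolding lsc_fun_def by (metis order_less_le_trans)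
  then have "\<forall>\<^sub>F y in at x. c < g y"
    by (rule less_LiminfD)
  then show ?thesis
    using assms(2) by (simp add: eventually_nhds_conv_at)
qed

lemma lsc_fun_add_continuous:
  fixes g :: "'a::topological_space \<Rightarrow> ereal"
  assumes "lsc_fun g" "\<And>x. g x \<noteq> -\<infinity>" "continuous_on UNIV q"
  shows "lsc_fun (\<lambda>x. g x + ereal (q x))"
  unfolding lsc_fun_def le_Liminf_iff
proof (intro allI impI)
  fix x and c :: ereal
  assume c: "c < g x + ereal (q x)"
  show "\<forall>\<^sub>F y in at x. c < g y + ereal (q y)"
  proof (cases c)
    case MInf
    have "-\<infinity> < g y + ereal (q y)" for y
      using assms(2)[of y] by (cases "g y") auto
    then show ?thesis
      using MInf by simp
  next
    case PInf
    then show ?thesis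
      using c by simp
  next
    case (real r)
    then have "ereal (r - q x) < g x"
      using c by (cases "g x") auto
    then obtain s where s: "r - q x < s" "ereal s < g x"
      using ereal_dense2 by (metis less_ereal.simps(1))
    have "\<forall>\<^sub>F y in at x. ereal s < g y"
      using lsc_funD[OF assms(1) s(2)] by (simp add: eventually_nhds_conv_at)
    moreover have "(q \<longlongrightarrow> q x) (at x)"
      using assms(3) by (simp add: continuous_on_def)
    then have "\<forall>\<^sub>F y in at x. r - s < q y"
      using s(1) by (intro order_tendstoD(1)) auto
    ultimately show ?thesis
    proof eventually_elim
      fix y
      assume "ereal s < g y" "r - s < q y"
      then show "c < g y + ereal (q y)"
        using real by (cases "g y") auto
    qed
  qed
qed

lemma lsc_fun_attains_min_on_compact:
  fixes f :: "'a::topological_space \<Rightarrow> ereal"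
  assumes "lsc_fun f" "compact K" "K \<noteq> {}"
  shows "\<exists>x\<in>K. \<forall>y\<in>K. f x \<le> f y"
proof (rule ccontr)
  assume no_min: "\<not> ?thesis"
  define m where "m = (INF y\<in>K. f y)"
  have "\<exists>c. m < c \<and> x \<in> interior {y. c < f y}" if "x \<in> K" for x
  proof -
    obtain y where "y \<in> K" "f y < f x"
      using no_min \<open>x \<in> K\<close> by (meson not_le)
    then have "m < f x"
      unfolding m_def by (meson INF_lower order_le_less_trans)
    then obtain c where "m < c" "c < f x"
      using dense by blast
    moreover obtain S where "open S" "x \<in> S" "\<forall>y\<in>S. c < f y"
      using lsc_funD[OF assms(1) \<open>c < f x\<close>] unfolding eventually_nhds by blast
    then have "x \<in> interior {y. c < f y}"
      using interior_maximal[of S "{y. c < f y}"] by blast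
    ultimately show ?thesis
      by blast
  qed
  then have "\<forall>x\<in>K. \<exists>c. m < c \<and> x \<in> interior {y. c < f y}"
    by blast
  from bchoice[OF this] obtain c
    where c: "\<And>x. x \<in> K \<Longrightarrow> m < c x \<and> x \<in> interior {y. c x < f y}"
    by blast
  obtain F where F: "F \<subseteq> K" "finite F" "K \<subseteq> (\<Union>x\<in>F. interior {y. c x < f y})"
    by (rule compactE_image[OF assms(2), of K "\<lambda>x. interior {y. c x < f y}"]) (use c in auto)
  then have "F \<noteq> {}"
    using assms(3) by blast
  define c0 where "c0 = Min (c ` F)"
  have "m < c0"
    unfolding c0_def using F \<open>F \<noteq> {}\<close> c by (subst Min_gr_iff) auto
  moreover have "c0 \<le> f y" if "y \<in> K" for y
  proof -
    obtain x where "x \<in> F" "y \<in> interior {z. c x < f z}"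
      using F \<open>y \<in> K\<close> by blast
    then have "c0 \<le> c x" "c x < f y"
      unfolding c0_def using F interior_subset by auto
    then show ?thesis
      by simp
  qed
  then have "c0 \<le> m"
    unfolding m_def by (simp add: INF_greatest)
  ultimately show False
    by simp
qed

lemma proper_funE:
  assumes "proper_fun g"
  obtains x r where "g x = ereal r"
proof -
  obtain x where "g x < \<infinity>" "g x \<noteq> -\<infinity>"
    using assms unfolding proper_fun_def by blast
  then show ?thesis
    using that by (cases "g x") auto
qed

lemma convex_fun_minorant_from_cball:
  fixes g :: "'a::real_normed_vector \<Rightarrow> ereal"
  assumes "convex_fun g" "g x0 = ereal r" "\<And>y. y \<in> cball x0 1 \<Longrightarrow> ereal m \<le> g y"
  shows "ereal (m - (r - m) * norm (y - x0)) \<le> g y"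
proof -
  have "m \<le> r"
    using assms(2) assms(3)[of x0] by simp
  show ?thesis
  proof (cases "norm (y - x0) \<le> 1")
    case True
    then have "ereal m \<le> g y"
      using assms(3) by (simp add: dist_norm norm_minus_commute)
    moreover have "m - (r - m) * norm (y - x0) \<le> m"
      using \<open>m \<le> r\<close> by simp
    ultimately show ?thesis
      by (meson ereal_less_eq(3) order_trans)
  next
    case False
    define t where "t = norm (y - x0)"
    have "t > 1"
      using False t_def by simp
    have "(1 / t) *\<^sub>R y + (1 - 1 / t) *\<^sub>R x0 - x0 = (1 / t) *\<^sub>R (y - x0)"
      by (simp add: algebra_simps)
    then have "norm ((1 / t) *\<^sub>R y + (1 - 1 / t) *\<^sub>R x0 - x0) = 1"
      using \<open>t > 1\<close> by (auto simp: t_def)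
    then have "(1 / t) *\<^sub>R y + (1 - 1 / t) *\<^sub>R x0 \<in> cball x0 1"
      by (simp add: dist_norm norm_minus_commute)
    moreover have "0 < 1 / t" "1 / t < 1"
      using \<open>t > 1\<close> by auto
    then have "g ((1 / t) *\<^sub>R y + (1 - 1 / t) *\<^sub>R x0) \<le> ereal (1 / t) * g y + ereal (1 - 1 / t) * g x0"
      using assms(1) unfolding convex_fun_def by blast
    ultimately have "ereal m \<le> ereal (1 / t) * g y + ereal (1 - 1 / t) * ereal r"
      using assms(2,3) order_trans by metis
    then show ?thesis
    proof (cases "g y")
      case (real q)
      then have "m \<le> q / t + (1 - 1 / t) * r"
        using \<open>ereal m \<le> _\<close> by simp
      then have "t * m \<le> q + (t - 1) * r"
        using \<open>t > 1\<close> by (simp add: field_simps)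
      then have "m - (r - m) * t \<le> q"
        using \<open>m \<le> r\<close> by (simp add: algebra_simps)
      then show ?thesis
        using real t_def by simp
    qed (use \<open>t > 1\<close> in auto)
  qed
qed

lemma proper_lsc_convex_minorant:
  fixes g :: "'a::euclidean_space \<Rightarrow> ereal"
  assumes "proper_fun g" "lsc_fun g" "convex_fun g"
  shows "\<exists>a \<beta>. \<forall>y. ereal (a - \<beta> * norm (y - u)) \<le> g y"
proof -
  have not_MInf: "g x \<noteq> -\<infinity>" for x
    using assms(1) unfolding proper_fun_def by blast
  obtain x0 r where r: "g x0 = ereal r"
    using proper_funE[OF assms(1)] .
  obtain x1 where x1: "x1 \<in> cball x0 1" "\<forall>y\<in>cball x0 1. g x1 \<le> g y"
    using lsc_fun_attains_min_on_compact[OF assms(2) compact_cball[of x0 1]] by auto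
  then have "g x1 \<le> ereal r"
    using r by (metis centre_in_cball zero_le_one)
  then obtain m where m: "g x1 = ereal m" and "m \<le> r"
    using not_MInf[of x1] by (cases "g x1") auto
  show ?thesis
  proof (intro exI allI)
    fix y
    have "(r - m) * norm (y - x0) \<le> (r - m) * (norm (y - u) + norm (u - x0))"
      using \<open>m \<le> r\<close> norm_triangle_ineq[of "y - u" "u - x0"] by (intro mult_left_mono) auto
    then have "ereal (m - (r - m) * norm (u - x0) - (r - m) * norm (y - u))
        \<le> ereal (m - (r - m) * norm (y - x0))"
      by (simp add: algebra_simps)
    also have "\<dots> \<le> g y"
      by (rule convex_fun_minorant_from_cball[OF assms(3) r]) (use x1(2) m in auto)
    finally show "ereal (m - (r - m) * norm (u - x0) - (r - m) * norm (y - u)) \<le> g y" .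
  qed
qed

text \<open>An abbreviation rather than a definition, so that it matches the unfolded
  \<^const>\<open>prox\<close> and \<^const>\<open>moreau_env\<close> syntactically.\<close>

abbreviation prox_objective :: "real \<Rightarrow> ('a::real_normed_vector \<Rightarrow> ereal) \<Rightarrow> 'a \<Rightarrow> 'a \<Rightarrow> ereal" where
  "prox_objective \<gamma> g x y \<equiv> g y + ereal ((1 / (2 * \<gamma>)) * (norm (y - x))\<^sup>2)"

lemma prox_objective_has_minimizer:
  fixes g :: "'a::euclidean_space \<Rightarrow> ereal"
  assumes "proper_fun g" "lsc_fun g" "convex_fun g" "\<gamma> > 0"
  shows "\<exists>p. \<forall>y. prox_objective \<gamma> g u p \<le> prox_objective \<gamma> g u y"
proof -
  obtain x0 r where r: "g x0 = ereal r"
    using proper_funE[OF assms(1)] .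
  obtain a \<beta> where minorant: "\<And>y. ereal (a - \<beta> * norm (y - u)) \<le> g y"
    using proper_lsc_convex_minorant[OF assms(1-3)] by blast
  define H where "H = r + (1 / (2 * \<gamma>)) * (norm (x0 - u))\<^sup>2"
  have "\<forall>\<^sub>F t in at_top. H < a - \<beta> * t + (1 / (2 * \<gamma>)) * t\<^sup>2"
    using \<open>\<gamma> > 0\<close> by real_asymp
  then obtain R0 where R0: "\<And>t. t \<ge> R0 \<Longrightarrow> H < a - \<beta> * t + (1 / (2 * \<gamma>)) * t\<^sup>2"
    by (auto simp: eventually_at_top_linorder)
  define R where "R = max R0 (norm (x0 - u))"
  have far: "prox_objective \<gamma> g u x0 < prox_objective \<gamma> g u y" if "R < norm (y - u)" for y
  proof -
    have "ereal H < ereal (a - \<beta> * norm (y - u)) + ereal ((1 / (2 * \<gamma>)) * (norm (y - u))\<^sup>2)"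
      using R0[of "norm (y - u)"] that by (simp add: R_def)
    also have "\<dots> \<le> prox_objective \<gamma> g u y"
      using minorant by (intro add_right_mono)
    finally show ?thesis
      using r by (simp add: H_def)
  qed
  have "lsc_fun (prox_objective \<gamma> g u)"
    using assms(1) unfolding proper_fun_def
    by (intro lsc_fun_add_continuous assms(2) continuous_intros) auto
  then obtain p where p: "\<forall>y\<in>cball u R. prox_objective \<gamma> g u p \<le> prox_objective \<gamma> g u y"
    using lsc_fun_attains_min_on_compact[OF _ compact_cball[of u R]] by (auto simp: R_def)
  have "x0 \<in> cball u R"
    by (simp add: R_def dist_norm norm_minus_commute)
  then have "prox_objective \<gamma> g u p \<le> prox_objective \<gamma> g u x0"
    using p by blast
  then have "prox_objective \<gamma> g u p \<le> prox_objective \<gamma> g u y" for y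
  proof (cases "y \<in> cball u R")
    case False
    then show ?thesis
      using far[of y] \<open>prox_objective \<gamma> g u p \<le> _\<close> by (simp add: dist_norm norm_minus_commute)
  qed (use p in blast)
  then show ?thesis
    by blast
qed

lemma subdiff_imp_prox_objective_growth:
  fixes g :: "'a::real_inner \<Rightarrow> ereal"
  assumes "\<gamma> > 0" "(1 / \<gamma>) *\<^sub>R (x - p) \<in> subdiff g p"
  shows "prox_objective \<gamma> g x p + ereal ((norm (y - p))\<^sup>2 / (2 * \<gamma>)) \<le> prox_objective \<gamma> g x y"
proof -
  obtain gp where gp: "g p = ereal gp"
    using assms(2) unfolding subdiff_def by (cases "g p") auto
  have subgradient: "g p + ereal (inner ((1 / \<gamma>) *\<^sub>R (x - p)) (y - p)) \<le> g y"
    using assms(2) unfolding subdiff_def by blast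
  show ?thesis
  proof (cases "g y")
    case (real gy)
    have "(norm (y - x))\<^sup>2 = (norm (p - x))\<^sup>2 + 2 * inner (p - x) (y - p) + (norm (y - p))\<^sup>2"
      by (simp add: power2_norm_eq_inner inner_simps inner_commute)
    then have "(norm (y - x))\<^sup>2 / (2 * \<gamma>) =
        (norm (p - x))\<^sup>2 / (2 * \<gamma>) + inner (p - x) (y - p) / \<gamma> + (norm (y - p))\<^sup>2 / (2 * \<gamma>)"
      using \<open>\<gamma> > 0\<close> by (simp add: field_simps)
    moreover have "gp - inner (p - x) (y - p) / \<gamma> \<le> gy"
      using subgradient gp real by (simp add: inner_diff_left inner_diff_right diff_divide_distrib)
    ultimately show ?thesis
      using gp real by simp
  qed (use subgradient gp in auto)
qed

lemma prox_objective_min_imp_subdiff: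
  fixes g :: "'a::real_inner \<Rightarrow> ereal"
  assumes "proper_fun g" "convex_fun g" "\<gamma> > 0"
    and min: "\<And>y. prox_objective \<gamma> g x p \<le> prox_objective \<gamma> g x y"
  shows "(1 / \<gamma>) *\<^sub>R (x - p) \<in> subdiff g p"
proof -
  obtain x0 r where "g x0 = ereal r"
    using proper_funE[OF assms(1)] .
  then have "prox_objective \<gamma> g x x0 < \<infinity>"
    by simp
  then have "prox_objective \<gamma> g x p < \<infinity>"
    by (rule order_le_less_trans[OF min])
  then obtain gp where gp: "g p = ereal gp"
    using assms(1) unfolding proper_fun_def by (cases "g p") auto
  have "g p + ereal (inner ((1 / \<gamma>) *\<^sub>R (x - p)) (y - p)) \<le> g y" for y
  proof (cases "g y")
    case (real gy)
    define N where "N = (norm (y - p))\<^sup>2 / (2 * \<gamma>)"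
    have bound: "gp - gy \<le> inner (p - x) (y - p) / \<gamma> + t * N" if "0 < t" "t < 1" for t
    proof -
      define yt where "yt = t *\<^sub>R y + (1 - t) *\<^sub>R p"
      have "g yt \<le> ereal t * g y + ereal (1 - t) * g p"
        using assms(2) that unfolding convex_fun_def yt_def by blast
      then have "g yt \<le> ereal (t * gy + (1 - t) * gp)"
        by (simp add: real gp)
      moreover have "prox_objective \<gamma> g x p \<le> prox_objective \<gamma> g x yt"
        by (rule min)
      ultimately have descent: "gp + (norm (p - x))\<^sup>2 / (2 * \<gamma>) \<le> t * gy + (1 - t) * gp + (norm (yt - x))\<^sup>2 / (2 * \<gamma>)"
        using gp by (cases "g yt") auto
      have yt_x: "yt - x = (p - x) + t *\<^sub>R (y - p)"
        unfolding yt_def by (simp add: algebra_simps)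
      have "(norm (yt - x))\<^sup>2 = (norm (p - x))\<^sup>2 + 2 * t * inner (p - x) (y - p) + t\<^sup>2 * (norm (y - p))\<^sup>2"
        unfolding yt_x using dot_norm[of "p - x" "t *\<^sub>R (y - p)"] by (simp add: power_mult_distrib)
      then have "(norm (yt - x))\<^sup>2 / (2 * \<gamma>) =
          (norm (p - x))\<^sup>2 / (2 * \<gamma>) + t * (inner (p - x) (y - p) / \<gamma>) + t * (t * N)"
        using \<open>\<gamma> > 0\<close> by (simp add: N_def field_simps power2_eq_square)
      then have "t * (gp - gy) \<le> t * (inner (p - x) (y - p) / \<gamma> + t * N)"
        using descent by (simp add: algebra_simps)
      then show ?thesis
        using \<open>0 < t\<close> by simp
    qed
    have "((\<lambda>t. inner (p - x) (y - p) / \<gamma> + t * N) \<longlongrightarrow> inner (p - x) (y - p) / \<gamma> + 0 * N) (at_right 0)"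
      by (intro tendsto_intros)
    moreover have "\<forall>\<^sub>F t in at_right 0. gp - gy \<le> inner (p - x) (y - p) / \<gamma> + t * N"
      using eventually_at_right_real[OF zero_less_one] by eventually_elim (simp add: bound)
    ultimately have "gp - gy \<le> inner (p - x) (y - p) / \<gamma>"
      using tendsto_lowerbound by fastforce
    then show ?thesis
      using gp real by (simp add: inner_diff_left inner_diff_right diff_divide_distrib)
  qed (use assms(1) gp in \<open>auto simp: proper_fun_def\<close>)
  then show ?thesis
    using gp unfolding subdiff_def by auto
qed

lemma subdiff_imp_prox_objective_min:
  fixes g :: "'a::real_inner \<Rightarrow> ereal"
  assumes "\<gamma> > 0" "(1 / \<gamma>) *\<^sub>R (x - p) \<in> subdiff g p"
  shows "prox_objective \<gamma> g x p \<le> prox_objective \<gamma> g x y"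
proof -
  have "0 \<le> ereal ((norm (y - p))\<^sup>2 / (2 * \<gamma>))"
    using assms(1) by simp
  then have "prox_objective \<gamma> g x p \<le> prox_objective \<gamma> g x p + ereal ((norm (y - p))\<^sup>2 / (2 * \<gamma>))"
    by (rule add_increasing2) simp
  then show ?thesis
    using subdiff_imp_prox_objective_growth[OF assms] by (rule order_trans)
qed

lemma prox_eqI:
  fixes g :: "'a::real_inner \<Rightarrow> ereal"
  assumes "\<gamma> > 0" "(1 / \<gamma>) *\<^sub>R (x - p) \<in> subdiff g p"
  shows "prox \<gamma> g x = p"
  unfolding prox_def
proof (rule the_equality)
  show "\<forall>y. prox_objective \<gamma> g x p \<le> prox_objective \<gamma> g x y"
    using subdiff_imp_prox_objective_min[OF assms] by blast
  fix q
  assume "\<forall>y. prox_objective \<gamma> g x q \<le> prox_objective \<gamma> g x y"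
  then have "prox_objective \<gamma> g x p + ereal ((norm (q - p))\<^sup>2 / (2 * \<gamma>)) \<le> prox_objective \<gamma> g x p"
    using subdiff_imp_prox_objective_growth[OF assms, of q] order_trans by blast
  moreover obtain gp where "g p = ereal gp"
    using assms(2) unfolding subdiff_def by (cases "g p") auto
  ultimately have "(norm (q - p))\<^sup>2 / (2 * \<gamma>) \<le> 0"
    by simp
  then show "q = p"
    using assms(1) by (simp add: divide_le_0_iff)
qed

lemma subdiff_prox:
  fixes g :: "'a::euclidean_space \<Rightarrow> ereal"
  assumes "proper_fun g" "lsc_fun g" "convex_fun g" "\<gamma> > 0"
  shows "(1 / \<gamma>) *\<^sub>R (x - prox \<gamma> g x) \<in> subdiff g (prox \<gamma> g x)"
proof -
  obtain p where "\<forall>y. prox_objective \<gamma> g x p \<le> prox_objective \<gamma> g x y"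
    using prox_objective_has_minimizer[OF assms] by blast
  then have "(1 / \<gamma>) *\<^sub>R (x - p) \<in> subdiff g p"
    using prox_objective_min_imp_subdiff[OF assms(1,3,4)] by blast
  moreover from this have "prox \<gamma> g x = p"
    by (rule prox_eqI[OF assms(4)])
  ultimately show ?thesis
    by simp
qed

lemma moreau_env_eq_prox_objective:
  fixes g :: "'a::euclidean_space \<Rightarrow> ereal"
  assumes "proper_fun g" "lsc_fun g" "convex_fun g" "\<gamma> > 0"
  shows "moreau_env \<gamma> g x = prox_objective \<gamma> g x (prox \<gamma> g x)"
  unfolding moreau_env_def
proof (rule antisym)
  show "(INF y. prox_objective \<gamma> g x y) \<le> prox_objective \<gamma> g x (prox \<gamma> g x)"
    by (rule INF_lower) simp
  show "prox_objective \<gamma> g x (prox \<gamma> g x) \<le> (INF y. prox_objective \<gamma> g x y)"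
    using subdiff_imp_prox_objective_min[OF assms(4) subdiff_prox[OF assms]] by (rule INF_greatest)
qed

lemma prox_firmly_nonexpansive:
  fixes g :: "'a::euclidean_space \<Rightarrow> ereal"
  assumes "proper_fun g" "lsc_fun g" "convex_fun g" "\<gamma> > 0"
  shows "(norm (prox \<gamma> g x - prox \<gamma> g y))\<^sup>2 \<le> inner (prox \<gamma> g x - prox \<gamma> g y) (x - y)"
proof -
  define p q where "p = prox \<gamma> g x" and "q = prox \<gamma> g y"
  have "(1 / \<gamma>) *\<^sub>R (x - p) \<in> subdiff g p" "(1 / \<gamma>) *\<^sub>R (y - q) \<in> subdiff g q"
    unfolding p_def q_def by (intro subdiff_prox[OF assms])+
  then have "g p + ereal (inner ((1 / \<gamma>) *\<^sub>R (x - p)) (q - p)) \<le> g q"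
    and "g q + ereal (inner ((1 / \<gamma>) *\<^sub>R (y - q)) (p - q)) \<le> g p"
    and "\<bar>g p\<bar> \<noteq> \<infinity>" "\<bar>g q\<bar> \<noteq> \<infinity>"
    unfolding subdiff_def by auto
  then have "(inner (x - p) (q - p) + inner (y - q) (p - q)) / \<gamma> \<le> 0"
    by (cases "g p"; cases "g q") (auto simp: add_divide_distrib)
  moreover have "inner (x - p) (q - p) + inner (y - q) (p - q) = - inner ((x - y) - (p - q)) (p - q)"
    by (simp add: inner_simps inner_commute)
  ultimately have "0 \<le> inner ((x - y) - (p - q)) (p - q)"
    using assms(4) by (simp add: zero_le_divide_iff)
  then show ?thesis
    unfolding p_def[symmetric] q_def[symmetric]
    by (simp add: power2_norm_eq_inner inner_simps inner_commute)
qed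

section \<open>Differentiability of the Moreau envelope\<close>

lemma quadratic_remainder_imp_has_derivative:
  fixes f :: "'a::real_inner \<Rightarrow> real"
  assumes "\<And>d. \<bar>f (u + d) - f u - inner v d\<bar> \<le> C * (norm d)\<^sup>2"
  shows "(f has_derivative (\<lambda>h. inner v h)) (at u)"
  unfolding has_derivative_at
proof
  show "bounded_linear (inner v)"
    by (rule bounded_linear_inner_right)
  have lim: "((\<lambda>h. C * norm h) \<longlongrightarrow> 0) (at (0::'a))"
    using tendsto_mult_right_zero[OF tendsto_norm_zero[OF tendsto_ident_at]] .
  have "norm (f (u + h) - f u - inner v h) / norm h \<le> C * norm h" for h
  proof (cases "h = 0")
    case False
    then show ?thesis
      using assms[of h] by (simp add: divide_le_eq power2_eq_square mult.assoc)
  qed simp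
  then have "\<forall>h. norm (norm (f (u + h) - f u - inner v h) / norm h) \<le> C * norm h"
    by simp
  from Lim_null_comparison[OF always_eventually[OF this] lim]
  show "((\<lambda>h. norm (f (u + h) - f u - inner v h) / norm h) \<longlongrightarrow> 0) (at 0)" .
qed

lemma grad_eqI:
  assumes "(f has_derivative (\<lambda>h. inner v h)) (at u)"
  shows "grad f u = v"
proof -
  have "(f has_derivative (\<lambda>h. inner (grad f u) h)) (at u)"
    unfolding grad_def by (rule someI[of _ v]) (rule assms)
  then have "(\<lambda>h. inner (grad f u) h) = (\<lambda>h. inner v h)"
    using assms by (rule has_derivative_unique)
  then show ?thesis
    by (simp add: fun_eq_iff vector_eq_rdot)
qed

lemma moreau_env_eq_ereal:
  fixes g :: "'a::euclidean_space \<Rightarrow> ereal"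
  assumes "proper_fun g" "lsc_fun g" "convex_fun g" "\<gamma> > 0"
  shows "moreau_env \<gamma> g x = ereal (real_of_ereal (g (prox \<gamma> g x)) + (norm (prox \<gamma> g x - x))\<^sup>2 / (2 * \<gamma>))"
proof -
  have "\<bar>g (prox \<gamma> g x)\<bar> \<noteq> \<infinity>"
    using subdiff_prox[OF assms, of x] unfolding subdiff_def by simp
  then show ?thesis
    unfolding moreau_env_eq_prox_objective[OF assms] by (cases "g (prox \<gamma> g x)") auto
qed

lemma moreau_env_upper_bound:
  fixes g :: "'a::euclidean_space \<Rightarrow> ereal"
  assumes "proper_fun g" "lsc_fun g" "convex_fun g" "\<gamma> > 0"
  shows "real_of_ereal (moreau_env \<gamma> g (x + d)) \<le>
    real_of_ereal (moreau_env \<gamma> g x) + inner ((1 / \<gamma>) *\<^sub>R (x - prox \<gamma> g x)) d + (norm d)\<^sup>2 / (2 * \<gamma>)"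
proof -
  define p where "p = prox \<gamma> g x"
  have "\<bar>g p\<bar> \<noteq> \<infinity>"
    using subdiff_prox[OF assms, of x] unfolding p_def subdiff_def by simp
  have "moreau_env \<gamma> g (x + d) \<le> prox_objective \<gamma> g (x + d) p"
    unfolding moreau_env_def by (rule INF_lower) simp
  then have at_p: "real_of_ereal (moreau_env \<gamma> g (x + d)) \<le> real_of_ereal (g p) + (norm (p - (x + d)))\<^sup>2 / (2 * \<gamma>)"
    using \<open>\<bar>g p\<bar> \<noteq> \<infinity>\<close> unfolding moreau_env_eq_ereal[OF assms] by (cases "g p") auto
  have "p - (x + d) = (p - x) + - d"
    by simp
  then have expand: "(norm (p - (x + d)))\<^sup>2 / (2 * \<gamma>) =
      (norm (p - x))\<^sup>2 / (2 * \<gamma>) - inner (p - x) d / \<gamma> + (norm d)\<^sup>2 / (2 * \<gamma>)"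
    using dot_norm[of "p - x" "- d"] \<open>\<gamma> > 0\<close> by (simp add: field_simps)
  have "real_of_ereal (moreau_env \<gamma> g x) = real_of_ereal (g p) + (norm (p - x))\<^sup>2 / (2 * \<gamma>)"
    unfolding moreau_env_eq_ereal[OF assms] p_def by simp
  moreover have "inner ((1 / \<gamma>) *\<^sub>R (x - p)) d = - inner (p - x) d / \<gamma>"
    by (simp add: inner_diff_left)
  ultimately show ?thesis
    using at_p expand unfolding p_def by linarith
qed

lemma moreau_env_quadratic_remainder:
  fixes g :: "'a::euclidean_space \<Rightarrow> ereal"
  assumes "proper_fun g" "lsc_fun g" "convex_fun g" "\<gamma> > 0"
  shows "\<bar>real_of_ereal (moreau_env \<gamma> g (x + d)) - real_of_ereal (moreau_env \<gamma> g x)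
      - inner ((1 / \<gamma>) *\<^sub>R (x - prox \<gamma> g x)) d\<bar> \<le> (norm d)\<^sup>2 / (2 * \<gamma>)"
proof -
  let ?e = "\<lambda>x. real_of_ereal (moreau_env \<gamma> g x)"
  define \<Delta> where "\<Delta> = prox \<gamma> g (x + d) - prox \<gamma> g x"
  have "(norm \<Delta>)\<^sup>2 \<le> inner \<Delta> d"
    using prox_firmly_nonexpansive[OF assms, of "x + d" x] by (simp add: \<Delta>_def)
  moreover have "0 \<le> (norm (d - \<Delta>))\<^sup>2"
    by simp
  ultimately have "inner \<Delta> d \<le> (norm d)\<^sup>2"
    by (simp add: power2_norm_eq_inner inner_simps inner_commute)
  moreover have "inner ((1 / \<gamma>) *\<^sub>R (x + d - prox \<gamma> g (x + d)) - (1 / \<gamma>) *\<^sub>R (x - prox \<gamma> g x)) d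
      = ((norm d)\<^sup>2 - inner \<Delta> d) / \<gamma>"
    using assms(4) by (simp add: \<Delta>_def inner_simps power2_norm_eq_inner field_simps)
  ultimately have "0 \<le> inner ((1 / \<gamma>) *\<^sub>R (x + d - prox \<gamma> g (x + d)) - (1 / \<gamma>) *\<^sub>R (x - prox \<gamma> g x)) d"
    using assms(4) by simp
  moreover have "?e x \<le> ?e (x + d) + inner ((1 / \<gamma>) *\<^sub>R (x + d - prox \<gamma> g (x + d))) (- d) + (norm (- d))\<^sup>2 / (2 * \<gamma>)"
    using moreau_env_upper_bound[OF assms, of "x + d" "- d"] by simp
  moreover have "?e (x + d) \<le> ?e x + inner ((1 / \<gamma>) *\<^sub>R (x - prox \<gamma> g x)) d + (norm d)\<^sup>2 / (2 * \<gamma>)"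
    by (rule moreau_env_upper_bound[OF assms])
  ultimately show ?thesis
    by (simp add: inner_diff_left abs_le_iff)
qed

lemma moreau_env_has_derivative:
  fixes g :: "'a::euclidean_space \<Rightarrow> ereal"
  assumes "proper_fun g" "lsc_fun g" "convex_fun g" "\<gamma> > 0"
  shows "((\<lambda>x. real_of_ereal (moreau_env \<gamma> g x)) has_derivative
      (\<lambda>h. inner ((1 / \<gamma>) *\<^sub>R (x - prox \<gamma> g x)) h)) (at x)"
  using moreau_env_quadratic_remainder[OF assms]
  by (intro quadratic_remainder_imp_has_derivative[where C = "1 / (2 * \<gamma>)"]) simp

lemma grad_quadratic_plus_moreau_env:
  fixes g :: "'a::euclidean_space \<Rightarrow> ereal" and M :: "'a \<Rightarrow> 'a"
  assumes "proper_fun g" "lsc_fun g" "convex_fun g" "\<gamma> > 0"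
    and "linear M" "\<And>x y. inner (M x) y = inner x (M y)"
  shows "grad (\<lambda>u. (1 / 2) * (M u \<bullet> u) + c \<bullet> u + \<gamma> * real_of_ereal (moreau_env \<gamma> g u)) u
    = M u + c + (u - prox \<gamma> g u)"
proof (rule grad_eqI)
  have "(M has_derivative M) (at u)"
    using assms(5) by (simp add: bounded_linear_imp_has_derivative linear_conv_bounded_linear)
  then have quadratic: "((\<lambda>u. M u \<bullet> u) has_derivative (\<lambda>h. M u \<bullet> h + M h \<bullet> u)) (at u)"
    using has_derivative_inner[OF _ has_derivative_ident] by blast
  have linear: "((\<lambda>u. c \<bullet> u) has_derivative (\<lambda>h. c \<bullet> h)) (at u)"
    by (rule bounded_linear_imp_has_derivative[OF bounded_linear_inner_right])
  have derivative_eq: "(\<lambda>h. (1 / 2) * (M u \<bullet> h + M h \<bullet> u) + c \<bullet> h + \<gamma> * ((1 / \<gamma>) *\<^sub>R (u - prox \<gamma> g u) \<bullet> h))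
      = (\<lambda>h. (M u + c + (u - prox \<gamma> g u)) \<bullet> h)"
  proof -
    have "M h \<bullet> u = M u \<bullet> h" for h
      using assms(6)[of h u] by (simp add: inner_commute)
    then show ?thesis
      using assms(4) by (simp add: fun_eq_iff inner_add_left algebra_simps)
  qed
  show "((\<lambda>u. (1 / 2) * (M u \<bullet> u) + c \<bullet> u + \<gamma> * real_of_ereal (moreau_env \<gamma> g u))
      has_derivative (\<lambda>h. (M u + c + (u - prox \<gamma> g u)) \<bullet> h)) (at u)"
    by (rule has_derivative_eq_rhs[OF has_derivative_add[OF has_derivative_add[OF
          has_derivative_mult_right[OF quadratic, where x = "1 / 2"] linear]
          has_derivative_mult_right[OF moreau_env_has_derivative[OF assms(1-4)], where x = \<gamma>]]
          derivative_eq])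
qed

section \<open>The coderivative of the gradient\<close>

lemma gph_affine_minus_prox:
  fixes g :: "'a::euclidean_space \<Rightarrow> ereal" and M :: "'a \<Rightarrow> 'a"
  assumes "proper_fun g" "lsc_fun g" "convex_fun g" "\<gamma> > 0"
  shows "gph (\<lambda>x. {M x + c - prox \<gamma> g x}) =
    (\<lambda>(p, v). (p + \<gamma> *\<^sub>R v, M (p + \<gamma> *\<^sub>R v) + c - p)) ` gph (subdiff g)"
proof (intro equalityI subsetI)
  fix xy
  assume "xy \<in> gph (\<lambda>x. {M x + c - prox \<gamma> g x})"
  then obtain x where xy: "xy = (x, M x + c - prox \<gamma> g x)"
    unfolding gph_def by auto
  let ?p = "prox \<gamma> g x"
  have "(?p, (1 / \<gamma>) *\<^sub>R (x - ?p)) \<in> gph (subdiff g)"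
    using subdiff_prox[OF assms] unfolding gph_def by simp
  moreover have "?p + \<gamma> *\<^sub>R ((1 / \<gamma>) *\<^sub>R (x - ?p)) = x"
    using assms(4) by simp
  ultimately show "xy \<in> (\<lambda>(p, v). (p + \<gamma> *\<^sub>R v, M (p + \<gamma> *\<^sub>R v) + c - p)) ` gph (subdiff g)"
    unfolding xy by (force intro: image_eqI[of _ _ "(?p, (1 / \<gamma>) *\<^sub>R (x - ?p))"])
next
  fix xy
  assume "xy \<in> (\<lambda>(p, v). (p + \<gamma> *\<^sub>R v, M (p + \<gamma> *\<^sub>R v) + c - p)) ` gph (subdiff g)"
  then obtain p v where v: "v \<in> subdiff g p" and xy: "xy = (p + \<gamma> *\<^sub>R v, M (p + \<gamma> *\<^sub>R v) + c - p)"
    unfolding gph_def by auto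
  have "(1 / \<gamma>) *\<^sub>R (p + \<gamma> *\<^sub>R v - p) = v"
    using assms(4) by simp
  then have "prox \<gamma> g (p + \<gamma> *\<^sub>R v) = p"
    using prox_eqI[OF assms(4)] v by metis
  then show "xy \<in> gph (\<lambda>x. {M x + c - prox \<gamma> g x})"
    unfolding xy gph_def by simp
qed

lemma coderiv_affine_minus_prox_iff:
  fixes g :: "'a::euclidean_space \<Rightarrow> ereal" and M :: "'a \<Rightarrow> 'a"
  assumes "proper_fun g" "lsc_fun g" "convex_fun g" "\<gamma> > 0"
    and M: "linear M" "\<And>x y. inner (M x) y = inner x (M y)"
  shows "z \<in> coderiv (\<lambda>x. {M x + c - prox \<gamma> g x}) u (M u + c - prox \<gamma> g u) w \<longleftrightarrow>
    (1 / \<gamma>) *\<^sub>R (z - M w + w) \<in> subdiff2 g (prox \<gamma> g u) ((1 / \<gamma>) *\<^sub>R (u - prox \<gamma> g u)) (M w - z)"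
proof -
  define L :: "'a \<times> 'a \<Rightarrow> 'a \<times> 'a"
    where "L = (\<lambda>(p, v). (p + \<gamma> *\<^sub>R v, M (p + \<gamma> *\<^sub>R v) - p))"
  define p v where "p = prox \<gamma> g u" and "v = (1 / \<gamma>) *\<^sub>R (u - prox \<gamma> g u)"
  have "linear L"
    unfolding L_def by (intro linearI) (auto simp: linear_add[OF M(1)] linear_cmul[OF M(1)] algebra_simps)
  moreover have "bij L"
  proof (rule o_bij)
    define L' :: "'a \<times> 'a \<Rightarrow> 'a \<times> 'a"
      where "L' = (\<lambda>(x, y). (M x - y, (1 / \<gamma>) *\<^sub>R (x - M x + y)))"
    show "L' \<circ> L = id" "L \<circ> L' = id"
      unfolding L_def L'_def using assms(4) by (auto simp: fun_eq_iff algebra_simps)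
  qed
  ultimately have normal_cone_iff: "y \<in> lim_normal_cone ((\<lambda>x. L x + (0, c)) ` gph (subdiff g)) (L (p, v) + (0, c))
      \<longleftrightarrow> adjoint L y \<in> lim_normal_cone (gph (subdiff g)) (p, v)" for y
    by (rule lim_normal_cone_affine_image_iff)
  have "adjoint L = (\<lambda>(y1, y2). (y1 + M y2 - y2, \<gamma> *\<^sub>R (y1 + M y2)))"
    by (rule adjoint_unique) (auto simp: L_def inner_simps M(2) algebra_simps)
  then have adjoint_eq: "adjoint L (z, - w) = \<gamma> *\<^sub>R ((1 / \<gamma>) *\<^sub>R (z - M w + w), - (M w - z))"
    using assms(4) by (simp add: linear_neg[OF M(1)] algebra_simps)
  have "(\<lambda>x. L x + (0, c)) ` gph (subdiff g) = gph (\<lambda>x. {M x + c - prox \<gamma> g x})"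
    unfolding gph_affine_minus_prox[OF assms(1-4)] by (intro image_cong) (auto simp: L_def)
  moreover have "L (p, v) + (0, c) = (u, M u + c - prox \<gamma> g u)"
    using assms(4) by (simp add: L_def p_def v_def)
  ultimately have "z \<in> coderiv (\<lambda>x. {M x + c - prox \<gamma> g x}) u (M u + c - prox \<gamma> g u) w \<longleftrightarrow>
      adjoint L (z, - w) \<in> lim_normal_cone (gph (subdiff g)) (p, v)"
    unfolding coderiv_def normal_cone_iff[symmetric] by simp
  also have "\<dots> \<longleftrightarrow> (1 / \<gamma>) *\<^sub>R (z - M w + w) \<in> subdiff2 g p v (M w - z)"
    unfolding adjoint_eq lim_normal_cone_scaleR_iff[OF assms(4)] subdiff2_def coderiv_def by simp
  finally show ?thesis
    unfolding p_def v_def .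
qed

section \<open>Symmetric matrices\<close>

lemma symmetric_matrix_inner:
  fixes S :: "real^'n^'n"
  assumes "transpose S = S"
  shows "inner (S *v x) y = inner x (S *v y)"
proof -
  have "S *v x = x v* S"
    using vector_transpose_matrix[of x S] assms by simp
  then show ?thesis
    by (simp add: dot_lmul_matrix)
qed

lemma transpose_diff:
  fixes X Y :: "'a::ab_group_add^'n^'m"
  shows "transpose (X - Y) = transpose X - transpose Y"
  by (simp add: transpose_def vec_eq_iff)

lemma positive_definite_imp_invertible:
  fixes M :: "real^'n^'n"
  assumes "\<forall>x. x \<noteq> 0 \<longrightarrow> 0 < x \<bullet> (M *v x)"
  shows "invertible M"
proof -
  have "\<forall>x. M *v x = 0 \<longrightarrow> x = 0"
    using assms by force
  then show ?thesis
    unfolding invertible_left_inverse matrix_left_invertible_ker .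
qed

lemma transpose_matrix_inv:
  fixes M :: "real^'n^'n"
  assumes "transpose M = M" "invertible M"
  shows "transpose (matrix_inv M) = matrix_inv M"
proof -
  let ?Q = "matrix_inv M"
  have "M ** ?Q = mat 1 \<and> ?Q ** M = mat 1"
    using assms(2) unfolding invertible_def matrix_inv_def by (rule someI_ex)
  then have "transpose ?Q ** M = mat 1" "M ** ?Q = mat 1"
    using assms(1) matrix_transpose_mul[of M ?Q] by auto
  then have "transpose ?Q = transpose ?Q ** (M ** ?Q)" "(transpose ?Q ** M) ** ?Q = ?Q"
    by simp_all
  then show ?thesis
    by (simp add: matrix_mul_assoc)
qed

theorem lemma5p9:
  fixes A :: "real^'n^'n" and b :: "real^'n" and g :: "real^'n \<Rightarrow> ereal" and \<gamma> :: real
    and Q P :: "real^'n^'n" and c :: "real^'n" and \<psi> :: "real^'n \<Rightarrow> real"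
  assumes A_sym: "transpose A = A"
    and A_psd: "\<forall>x. 0 \<le> x \<bullet> (A *v x)"
    and g_proper: "proper_fun g" and g_lsc: "lsc_fun g" and g_convex: "convex_fun g"
    and \<gamma>_pos: "\<gamma> > 0"
    and pd: "\<forall>x. x \<noteq> 0 \<longrightarrow> 0 < x \<bullet> ((mat 1 - \<gamma> *\<^sub>R A) *v x)"
    and Q_def: "Q = matrix_inv (mat 1 - \<gamma> *\<^sub>R A)"
    and c_def: "c = \<gamma> *\<^sub>R (Q *v b)"
    and P_def: "P = Q - mat 1"
    and \<psi>_def: "\<psi> = (\<lambda>u. (1/2) * ((P *v u) \<bullet> u) + c \<bullet> u + \<gamma> * real_of_ereal (moreau_env \<gamma> g u))"
  shows "\<forall>u w z. z \<in> subdiff2_C1 \<psi> u w \<longleftrightarrow>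
    (1 / \<gamma>) *\<^sub>R (z - P *v w) \<in>
      subdiff2 g (prox \<gamma> g u) ((1 / \<gamma>) *\<^sub>R (u - prox \<gamma> g u)) (Q *v w - z)"
proof -
  have "transpose Q = Q"
    unfolding Q_def using A_sym positive_definite_imp_invertible[OF pd]
    by (intro transpose_matrix_inv) (simp_all add: transpose_diff transpose_scalar)
  then have "transpose P = P"
    unfolding P_def by (simp add: transpose_diff)
  have P_apply: "P *v x = Q *v x - x" for x
    unfolding P_def by (simp add: matrix_vector_mult_diff_rdistrib)
  have "grad \<psi> u = Q *v u + c - prox \<gamma> g u" for u
    unfolding \<psi>_def
    using grad_quadratic_plus_moreau_env[OF g_proper g_lsc g_convex \<gamma>_pos matrix_vector_mul_linear
        symmetric_matrix_inner[OF \<open>transpose P = P\<close>]]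
    by (simp add: P_apply)
  then have "subdiff2_C1 \<psi> u w = coderiv (\<lambda>x. {Q *v x + c - prox \<gamma> g x}) u (Q *v u + c - prox \<gamma> g u) w"
    for u w
    unfolding subdiff2_C1_def by simp
  then show ?thesis
    using coderiv_affine_minus_prox_iff[OF g_proper g_lsc g_convex \<gamma>_pos matrix_vector_mul_linear
        symmetric_matrix_inner[OF \<open>transpose Q = Q\<close>]]
    by (simp add: P_apply algebra_simps)
qed

end
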